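(* Let $G$ be a connected simple graph on $n\ge2$ vertices, let $\alpha\in\mathbb{R}$, and suppose the vertices are labeled so that $({}^\alpha m)_1+d_1\ge({}^\alpha m)_2+d_2\ge\cdots\ge({}^\alpha m)_n+d_n$. Let $\Delta$ be the maximum degree of $G$ and $N=\max_{i\sim j}d_j^\alpha/d_i^\alpha$. Then for $1\le i\le n$, writing $s_k=({}^\alpha m)_k+d_k$, \[\rho(Q(G))\le \frac{s_i+\Delta-N+\sqrt{(s_i-\Delta+N)^2+4N\sum_{k=1}^{i-1}(s_k-s_i)}}{2}.\] Equality holds if and only if $s_1=s_2=\cdots=s_n$, or there is $t$ with $2\le t\le i$ such that: if $\alpha=0$, $G$ is a bidegreed graph with $d_1=\cdots=d_{t-1}=n-1>d_t=\cdots=d_n$; if $\alpha>0$, $G$ is a bidegreed graph with $s_1>s_2=\cdots=s_n$ and $d_1=n-1>d_2=\cdots=d_n$. (For $\alpha<0$ only the first alternative occurs.)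
   Context: $Q(G)=D(G)+A(G)$ is the signless Laplacian matrix, where $A(G)$ is the adjacency matrix and $D(G)=\mathrm{diag}(d_1,\dots,d_n)$ is the diagonal matrix of vertex degrees. $i\sim j$ means $v_i,v_j$ adjacent. The generalized average degree is $({}^\alpha m)_i=\frac{\sum_{j\sim i}d_j^\alpha}{d_i^\alpha}$. $\rho$ is the spectral radius. A bidegreed graph has exactly two distinct vertex degrees. An empty sum equals $0$. *)

theory Defs
  imports "Jordan_Normal_Form.Spectral_Radius"
begin

text \<open>A simple graph on the vertex set {0..<n} (vertex k here is v_(k+1) of the paper),
given by an adjacency relation E.\<close>

definition simple_graph :: "nat \<Rightarrow> (nat \<Rightarrow> nat \<Rightarrow> bool) \<Rightarrow> bool" where
  "simple_graph n E \<longleftrightarrow> (\<forall>i j. E i j \<longrightarrow> i < n \<and> j < n) \<and>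
     (\<forall>i j. E i j \<longrightarrow> E j i) \<and> (\<forall>i. \<not> E i i)"

definition connected_graph :: "nat \<Rightarrow> (nat \<Rightarrow> nat \<Rightarrow> bool) \<Rightarrow> bool" where
  "connected_graph n E \<longleftrightarrow> (\<forall>u v. u < n \<longrightarrow> v < n \<longrightarrow> E\<^sup>*\<^sup>* u v)"

definition deg :: "nat \<Rightarrow> (nat \<Rightarrow> nat \<Rightarrow> bool) \<Rightarrow> nat \<Rightarrow> nat" where
  "deg n E i = card {j. j < n \<and> E i j}"

definition adj_mat :: "nat \<Rightarrow> (nat \<Rightarrow> nat \<Rightarrow> bool) \<Rightarrow> real mat" where
  "adj_mat n E = mat n n (\<lambda>(i, j). if E i j then 1 else 0)"

definition deg_mat :: "nat \<Rightarrow> (nat \<Rightarrow> nat \<Rightarrow> bool) \<Rightarrow> real mat" where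
  "deg_mat n E = mat n n (\<lambda>(i, j). if i = j then real (deg n E i) else 0)"

definition signless_laplacian :: "nat \<Rightarrow> (nat \<Rightarrow> nat \<Rightarrow> bool) \<Rightarrow> real mat" where
  "signless_laplacian n E = deg_mat n E + adj_mat n E"

definition rho_Q :: "nat \<Rightarrow> (nat \<Rightarrow> nat \<Rightarrow> bool) \<Rightarrow> real" where
  "rho_Q n E = spectral_radius (map_mat complex_of_real (signless_laplacian n E))"

definition gen_avg_deg :: "nat \<Rightarrow> (nat \<Rightarrow> nat \<Rightarrow> bool) \<Rightarrow> real \<Rightarrow> nat \<Rightarrow> real" where
  "gen_avg_deg n E \<alpha> i =
     (\<Sum>j\<in>{j. j < n \<and> E i j}. real (deg n E j) powr \<alpha>) / real (deg n E i) powr \<alpha>"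

definition bidegreed :: "nat \<Rightarrow> (nat \<Rightarrow> nat \<Rightarrow> bool) \<Rightarrow> bool" where
  "bidegreed n E \<longleftrightarrow> card (deg n E ` {..<n}) = 2"

end

theory Submission
  imports Defs
begin

text \<open>A Collatz--Wielandt argument.  If a nonnegative matrix Q and a positive vector p satisfy
  Q p \<le> phi p row by row, every eigenvalue of Q has modulus at most phi; if moreover Q is
  irreducible and some eigenvalue has modulus phi, the indices where |v k| / p k is maximal are
  closed under the edges of Q, so Q p = phi p.

  Here p k = d_k^alpha x k, where x k - 1 is proportional to s k - s i for k < i and vanishes
  otherwise.  The defect phi p k - (Q p) k splits into four nonnegative slacks, and all of them
  vanish iff every vertex with s k > s i is adjacent to all other vertices and satisfies
  d_k^alpha = N d_j^alpha for each neighbour j, while s k = s i for k \<ge> i.  A case analysis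
  on the sign of alpha turns this condition into the graphs listed in the theorem.\<close>

lemma mult_mat_vec_index_sum:
  assumes "A \<in> carrier_mat n n" "u \<in> carrier_vec n" "k < n"
  shows "(A *\<^sub>v u) $ k = (\<Sum>j<n. A $$ (k, j) * u $ j)"
  using assms by (auto simp: scalar_prod_def lessThan_atLeast0 intro!: sum.cong)

lemma eigen_equations_of_spectrum:
  fixes A :: "complex mat"
  assumes A: "A \<in> carrier_mat n n" and "\<mu> \<in> spectrum A"
  obtains j0 and v :: "nat \<Rightarrow> complex" where "j0 < n" "v j0 \<noteq> 0"
    "\<And>k. k < n \<Longrightarrow> (\<Sum>j<n. A $$ (k, j) * v j) = \<mu> * v k"
proof -
  obtain u where "eigenvector A u \<mu>"
    using \<open>\<mu> \<in> spectrum A\<close> unfolding spectrum_def eigenvalue_def by auto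
  hence u: "u \<in> carrier_vec n" "u \<noteq> 0\<^sub>v n" "A *\<^sub>v u = \<mu> \<cdot>\<^sub>v u"
    using A unfolding eigenvector_def by auto
  obtain j0 where "j0 < n" "u $ j0 \<noteq> 0"
    using u(1,2) by (metis carrier_vecD eq_vecI index_zero_vec(1,2))
  moreover have "(\<Sum>j<n. A $$ (k, j) * u $ j) = \<mu> * u $ k" if "k < n" for k
    using arg_cong[OF u(3), of "\<lambda>v. v $ k"] mult_mat_vec_index_sum[OF A u(1) that] u(1) that
    by simp
  ultimately show ?thesis using that by blast
qed

lemma spectrum_of_eigen_equations:
  fixes A :: "complex mat"
  assumes A: "A \<in> carrier_mat n n" and "j0 < n" "v j0 \<noteq> 0"
    and ev: "\<And>k. k < n \<Longrightarrow> (\<Sum>j<n. A $$ (k, j) * v j) = \<mu> * v k"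
  shows "\<mu> \<in> spectrum A"
proof -
  define u where "u = vec n v"
  have u: "u \<in> carrier_vec n" "u \<noteq> 0\<^sub>v n"
    using assms(2,3) unfolding u_def by (auto simp: vec_eq_iff)
  have "A *\<^sub>v u = \<mu> \<cdot>\<^sub>v u"
  proof (rule eq_vecI)
    fix k assume "k < dim_vec (\<mu> \<cdot>\<^sub>v u)"
    hence k: "k < n" using u(1) by simp
    show "(A *\<^sub>v u) $ k = (\<mu> \<cdot>\<^sub>v u) $ k"
      using mult_mat_vec_index_sum[OF A u(1) k] ev[OF k] k by (simp add: u_def)
  qed (use A u(1) in simp)
  hence "eigenvector A u \<mu>" using A u unfolding eigenvector_def by auto
  thus ?thesis unfolding spectrum_def eigenvalue_def by auto
qed

lemma max_ratio_witness:
  fixes p :: "nat \<Rightarrow> real" and v :: "nat \<Rightarrow> complex"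
  assumes pos: "\<And>j. j < n \<Longrightarrow> 0 < p j" and v: "j0 < n" "v j0 \<noteq> 0"
  obtains m where "0 < m" "\<And>j. j < n \<Longrightarrow> cmod (v j) \<le> m * p j" "\<exists>k<n. cmod (v k) = m * p k"
proof
  define m where "m = Max ((\<lambda>j. cmod (v j) / p j) ` {..<n})"
  have le: "cmod (v j) / p j \<le> m" if "j < n" for j
    unfolding m_def using that by (intro Max_ge) auto
  show "0 < m" using le[OF v(1)] pos[OF v(1)] v(2) by (smt (verit) divide_pos_pos zero_less_norm_iff)
  show "cmod (v j) \<le> m * p j" if "j < n" for j
    using le[OF that] pos[OF that] by (simp add: divide_le_eq mult.commute)
  have "m \<in> (\<lambda>j. cmod (v j) / p j) ` {..<n}" unfolding m_def using v(1) by (intro Max_in) auto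
  then obtain k where "k < n" "m = cmod (v k) / p k" by blast
  thus "\<exists>k<n. cmod (v k) = m * p k" using pos[of k] by auto
qed

lemma norm_eigenvalue_at_max_ratio:
  fixes A :: "real mat" and p :: "nat \<Rightarrow> real" and v :: "nat \<Rightarrow> complex"
  assumes nonneg: "\<And>k j. k < n \<Longrightarrow> j < n \<Longrightarrow> 0 \<le> A $$ (k, j)"
    and ev: "\<And>k. k < n \<Longrightarrow> (\<Sum>j<n. of_real (A $$ (k, j)) * v j) = \<mu> * v k"
    and bound: "\<And>j. j < n \<Longrightarrow> cmod (v j) \<le> m * p j"
    and k: "k < n" "cmod (v k) = m * p k"
  shows "cmod \<mu> * (m * p k) \<le> (\<Sum>j<n. A $$ (k, j) * cmod (v j))"
    and "(\<Sum>j<n. A $$ (k, j) * cmod (v j)) \<le> m * (\<Sum>j<n. A $$ (k, j) * p j)"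
proof -
  have "cmod \<mu> * (m * p k) = cmod (\<Sum>j<n. of_real (A $$ (k, j)) * v j)"
    using ev[OF k(1)] k(2) by (simp add: norm_mult)
  also have "\<dots> \<le> (\<Sum>j<n. cmod (of_real (A $$ (k, j)) * v j))"
    by (rule norm_sum)
  also have "\<dots> = (\<Sum>j<n. A $$ (k, j) * cmod (v j))"
    using nonneg[OF k(1)] by (intro sum.cong) (auto simp: norm_mult)
  finally show "cmod \<mu> * (m * p k) \<le> (\<Sum>j<n. A $$ (k, j) * cmod (v j))" .
  have "(\<Sum>j<n. A $$ (k, j) * cmod (v j)) \<le> (\<Sum>j<n. A $$ (k, j) * (m * p j))"
    using nonneg[OF k(1)] bound by (intro sum_mono mult_left_mono) auto
  thus "(\<Sum>j<n. A $$ (k, j) * cmod (v j)) \<le> m * (\<Sum>j<n. A $$ (k, j) * p j)"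
    by (simp add: sum_distrib_left algebra_simps)
qed

lemma norm_eigenvalue_le_of_row_bound:
  fixes A :: "real mat" and p :: "nat \<Rightarrow> real" and v :: "nat \<Rightarrow> complex"
  assumes nonneg: "\<And>k j. k < n \<Longrightarrow> j < n \<Longrightarrow> 0 \<le> A $$ (k, j)"
    and pos: "\<And>j. j < n \<Longrightarrow> 0 < p j"
    and v: "j0 < n" "v j0 \<noteq> 0"
    and ev: "\<And>k. k < n \<Longrightarrow> (\<Sum>j<n. of_real (A $$ (k, j)) * v j) = \<mu> * v k"
    and row: "\<And>k. k < n \<Longrightarrow> (\<Sum>j<n. A $$ (k, j) * p j) \<le> \<phi> * p k"
  shows "cmod \<mu> \<le> \<phi>"
proof -
  obtain m k where m: "0 < m" "\<And>j. j < n \<Longrightarrow> cmod (v j) \<le> m * p j"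
    and k: "k < n" "cmod (v k) = m * p k"
    using max_ratio_witness[of n p j0 v] pos v by metis
  note bounds = norm_eigenvalue_at_max_ratio[OF nonneg ev m(2) k]
  have "cmod \<mu> * (m * p k) \<le> \<phi> * (m * p k)"
    using bounds row[OF k(1)] mult_left_mono[OF row[OF k(1)] less_imp_le[OF m(1)]]
    by (simp add: algebra_simps)
  thus ?thesis using m(1) pos[OF k(1)] by simp
qed

lemma row_bound_attained_at_max_ratio:
  fixes A :: "real mat" and p :: "nat \<Rightarrow> real" and v :: "nat \<Rightarrow> complex"
  assumes nonneg: "\<And>k j. k < n \<Longrightarrow> j < n \<Longrightarrow> 0 \<le> A $$ (k, j)"
    and pos: "\<And>j. j < n \<Longrightarrow> 0 < p j"
    and ev: "\<And>k. k < n \<Longrightarrow> (\<Sum>j<n. of_real (A $$ (k, j)) * v j) = \<mu> * v k"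
    and row: "\<And>k. k < n \<Longrightarrow> (\<Sum>j<n. A $$ (k, j) * p j) \<le> \<phi> * p k"
    and ge: "\<phi> \<le> cmod \<mu>"
    and m: "0 < m" "\<And>j. j < n \<Longrightarrow> cmod (v j) \<le> m * p j"
    and k: "k < n" "cmod (v k) = m * p k"
  shows "(\<Sum>j<n. A $$ (k, j) * p j) = \<phi> * p k"
    and "\<And>j. j < n \<Longrightarrow> 0 < A $$ (k, j) \<Longrightarrow> cmod (v j) = m * p j"
proof -
  note bounds = norm_eigenvalue_at_max_ratio[OF nonneg ev m(2) k]
  have "\<phi> * (m * p k) \<le> cmod \<mu> * (m * p k)"
    using ge m(1) pos[OF k(1)] by (intro mult_right_mono) auto
  hence low: "\<phi> * (m * p k) \<le> (\<Sum>j<n. A $$ (k, j) * cmod (v j))" using bounds(1) by linarith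
  have up: "m * (\<Sum>j<n. A $$ (k, j) * p j) \<le> m * (\<phi> * p k)"
    using row[OF k(1)] m(1) by simp
  have "m * (\<phi> * p k) \<le> m * (\<Sum>j<n. A $$ (k, j) * p j)"
    using low bounds(2) by (simp add: algebra_simps)
  thus "(\<Sum>j<n. A $$ (k, j) * p j) = \<phi> * p k"
    using row[OF k(1)] m(1) by (simp add: antisym)
  have gap: "(\<Sum>j<n. A $$ (k, j) * (m * p j - cmod (v j))) = 0"
  proof (rule antisym)
    have "(\<Sum>j<n. A $$ (k, j) * (m * p j - cmod (v j)))
        = m * (\<Sum>j<n. A $$ (k, j) * p j) - (\<Sum>j<n. A $$ (k, j) * cmod (v j))"
      by (simp add: sum_subtractf sum_distrib_left algebra_simps)
    thus "(\<Sum>j<n. A $$ (k, j) * (m * p j - cmod (v j))) \<le> 0"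
      using low up by (simp add: algebra_simps)
    show "0 \<le> (\<Sum>j<n. A $$ (k, j) * (m * p j - cmod (v j)))"
      using nonneg[OF k(1)] m(2) by (intro sum_nonneg mult_nonneg_nonneg) auto
  qed
  fix j assume "j < n" "0 < A $$ (k, j)"
  moreover have "\<forall>j\<in>{..<n}. A $$ (k, j) * (m * p j - cmod (v j)) = 0"
    using gap nonneg[OF k(1)] m(2) by (subst sum_nonneg_eq_0_iff[symmetric]) auto
  ultimately show "cmod (v j) = m * p j" by force
qed

lemma row_bound_eq_of_norm_eigenvalue_ge:
  fixes A :: "real mat" and p :: "nat \<Rightarrow> real" and v :: "nat \<Rightarrow> complex"
  assumes nonneg: "\<And>k j. k < n \<Longrightarrow> j < n \<Longrightarrow> 0 \<le> A $$ (k, j)"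
    and pos: "\<And>j. j < n \<Longrightarrow> 0 < p j"
    and v: "j0 < n" "v j0 \<noteq> 0"
    and ev: "\<And>k. k < n \<Longrightarrow> (\<Sum>j<n. of_real (A $$ (k, j)) * v j) = \<mu> * v k"
    and row: "\<And>k. k < n \<Longrightarrow> (\<Sum>j<n. A $$ (k, j) * p j) \<le> \<phi> * p k"
    and irreducible: "\<And>a b. a < n \<Longrightarrow> b < n \<Longrightarrow> (\<lambda>a b. a < n \<and> b < n \<and> 0 < A $$ (a, b))\<^sup>*\<^sup>* a b"
    and ge: "\<phi> \<le> cmod \<mu>"
    and k: "k < n"
  shows "(\<Sum>j<n. A $$ (k, j) * p j) = \<phi> * p k"
proof -
  obtain m where m: "0 < m" "\<And>j. j < n \<Longrightarrow> cmod (v j) \<le> m * p j"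
    and "\<exists>k<n. cmod (v k) = m * p k"
    using max_ratio_witness[of n p j0 v] pos v by metis
  then obtain k0 where k0: "k0 < n" "cmod (v k0) = m * p k0" by blast
  note attained = row_bound_attained_at_max_ratio[OF nonneg pos ev row ge m]
  have "b < n \<and> cmod (v b) = m * p b"
    if "(\<lambda>a b. a < n \<and> b < n \<and> 0 < A $$ (a, b))\<^sup>*\<^sup>* k0 b" for b
    using that by (induction rule: rtranclp_induct) (use k0 attained(2) in auto)
  thus ?thesis using irreducible[OF k0(1) k] attained(1) k by blast
qed

lemma real_eigen_equations_of_spectrum:
  fixes A :: "real mat"
  assumes A: "A \<in> carrier_mat n n" and "\<mu> \<in> spectrum (map_mat complex_of_real A)"
  shows "\<exists>j0 (v :: nat \<Rightarrow> complex). j0 < n \<and> v j0 \<noteq> 0 \<and>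
    (\<forall>k<n. (\<Sum>j<n. of_real (A $$ (k, j)) * v j) = \<mu> * v k)"
proof -
  have A': "map_mat complex_of_real A \<in> carrier_mat n n" using A by simp
  obtain j0 v where v: "j0 < n" "v j0 \<noteq> 0"
    and ev: "\<And>k. k < n \<Longrightarrow> (\<Sum>j<n. map_mat complex_of_real A $$ (k, j) * v j) = \<mu> * v k"
    using eigen_equations_of_spectrum[OF A' \<open>\<mu> \<in> _\<close>] by blast
  have "(\<Sum>j<n. map_mat complex_of_real A $$ (k, j) * v j) = (\<Sum>j<n. of_real (A $$ (k, j)) * v j)"
    if "k < n" for k
    using A that by (intro sum.cong) auto
  with v ev show ?thesis by (intro exI[of _ j0] exI[of _ v]) simp
qed

lemma spectral_radius_le_of_row_bound:
  fixes A :: "real mat" and p :: "nat \<Rightarrow> real"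
  assumes A: "A \<in> carrier_mat n n" "0 < n"
    and nonneg: "\<And>k j. k < n \<Longrightarrow> j < n \<Longrightarrow> 0 \<le> A $$ (k, j)"
    and pos: "\<And>j. j < n \<Longrightarrow> 0 < p j"
    and row: "\<And>k. k < n \<Longrightarrow> (\<Sum>j<n. A $$ (k, j) * p j) \<le> \<phi> * p k"
  shows "spectral_radius (map_mat complex_of_real A) \<le> \<phi>"
proof -
  obtain \<mu> where \<mu>: "\<mu> \<in> spectrum (map_mat complex_of_real A)"
    and rad: "spectral_radius (map_mat complex_of_real A) = cmod \<mu>"
    using spectral_radius_mem_max(1)[of "map_mat complex_of_real A" n] A by auto
  obtain j0 and v :: "nat \<Rightarrow> complex" where v: "j0 < n" "v j0 \<noteq> 0"
    and ev: "\<forall>k<n. (\<Sum>j<n. of_real (A $$ (k, j)) * v j) = \<mu> * v k"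
    using real_eigen_equations_of_spectrum[OF A(1) \<mu>] by blast
  have "cmod \<mu> \<le> \<phi>"
    using norm_eigenvalue_le_of_row_bound[of n A p j0 v, OF nonneg pos v] ev row by blast
  thus ?thesis using rad by simp
qed

lemma row_bound_eq_of_spectral_radius_ge:
  fixes A :: "real mat" and p :: "nat \<Rightarrow> real"
  assumes A: "A \<in> carrier_mat n n" "0 < n"
    and nonneg: "\<And>k j. k < n \<Longrightarrow> j < n \<Longrightarrow> 0 \<le> A $$ (k, j)"
    and pos: "\<And>j. j < n \<Longrightarrow> 0 < p j"
    and row: "\<And>k. k < n \<Longrightarrow> (\<Sum>j<n. A $$ (k, j) * p j) \<le> \<phi> * p k"
    and irreducible: "\<And>a b. a < n \<Longrightarrow> b < n \<Longrightarrow> (\<lambda>a b. a < n \<and> b < n \<and> 0 < A $$ (a, b))\<^sup>*\<^sup>* a b"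
    and ge: "\<phi> \<le> spectral_radius (map_mat complex_of_real A)"
    and k: "k < n"
  shows "(\<Sum>j<n. A $$ (k, j) * p j) = \<phi> * p k"
proof -
  obtain \<mu> where \<mu>: "\<mu> \<in> spectrum (map_mat complex_of_real A)"
    and rad: "spectral_radius (map_mat complex_of_real A) = cmod \<mu>"
    using spectral_radius_mem_max(1)[of "map_mat complex_of_real A" n] A by auto
  obtain j0 and v :: "nat \<Rightarrow> complex" where v: "j0 < n" "v j0 \<noteq> 0"
    and ev: "\<forall>k<n. (\<Sum>j<n. of_real (A $$ (k, j)) * v j) = \<mu> * v k"
    using real_eigen_equations_of_spectrum[OF A(1) \<mu>] by blast
  show ?thesis
    by (rule row_bound_eq_of_norm_eigenvalue_ge[of n A p j0 v, OF nonneg pos v])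
      (use ev row irreducible ge rad k in auto)
qed

lemma spectral_radius_eq_of_positive_eigenvector:
  fixes A :: "real mat" and p :: "nat \<Rightarrow> real"
  assumes A: "A \<in> carrier_mat n n" "0 < n"
    and nonneg: "\<And>k j. k < n \<Longrightarrow> j < n \<Longrightarrow> 0 \<le> A $$ (k, j)"
    and pos: "\<And>j. j < n \<Longrightarrow> 0 < p j"
    and row: "\<And>k. k < n \<Longrightarrow> (\<Sum>j<n. A $$ (k, j) * p j) = \<phi> * p k"
  shows "spectral_radius (map_mat complex_of_real A) = \<phi>"
proof (rule antisym)
  show "spectral_radius (map_mat complex_of_real A) \<le> \<phi>"
    using spectral_radius_le_of_row_bound[OF A nonneg pos] row by simp
  have "(\<Sum>j<n. map_mat complex_of_real A $$ (k, j) * of_real (p j)) = of_real \<phi> * of_real (p k)"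
    if "k < n" for k
  proof -
    have "(\<Sum>j<n. map_mat complex_of_real A $$ (k, j) * of_real (p j))
        = of_real (\<Sum>j<n. A $$ (k, j) * p j)"
      using A(1) that by (auto intro!: sum.cong)
    thus ?thesis using row[OF that] by simp
  qed
  moreover have "complex_of_real (p 0) \<noteq> 0" using pos[OF A(2)] by simp
  ultimately have "complex_of_real \<phi> \<in> spectrum (map_mat complex_of_real A)"
    using A by (intro spectrum_of_eigen_equations[of _ n 0]) auto
  hence "cmod (complex_of_real \<phi>) \<le> spectral_radius (map_mat complex_of_real A)"
    using spectral_radius_mem_max(2)[of "map_mat complex_of_real A" n] A by (metis imageI map_carrier_mat)
  moreover have "0 \<le> \<phi>"
  proof -
    have "0 \<le> (\<Sum>j<n. A $$ (0, j) * p j)"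
      using nonneg[OF A(2)] pos by (intro sum_nonneg mult_nonneg_nonneg) (auto simp: less_imp_le)
    thus ?thesis using row[OF A(2)] pos[OF A(2)] by (simp add: zero_le_mult_iff)
  qed
  ultimately show "\<phi> \<le> spectral_radius (map_mat complex_of_real A)" by simp
qed

lemma powr_eq_iff_eq_base:
  fixes x y a :: real
  assumes "0 < x" "0 < y" "a \<noteq> 0"
  shows "x powr a = y powr a \<longleftrightarrow> x = y"
proof
  assume "x powr a = y powr a"
  hence "(x powr a) powr (1 / a) = (y powr a) powr (1 / a)" by simp
  thus "x = y" using assms by (simp add: powr_powr)
qed simp

lemma simple_graph_adj_less: "simple_graph n E \<Longrightarrow> E a b \<Longrightarrow> a < n \<and> b < n"
  unfolding simple_graph_def by blast

lemma adj_subset_others: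
  "simple_graph n E \<Longrightarrow> {j. j < n \<and> E k j} \<subseteq> {..<n} - {k}"
  unfolding simple_graph_def by blast

lemma deg_le: "simple_graph n E \<Longrightarrow> k < n \<Longrightarrow> deg n E k \<le> n - 1"
  using card_mono[OF _ adj_subset_others[of n E k]] unfolding deg_def by simp

lemma deg_eq_iff_adj_all:
  assumes "simple_graph n E" "k < n"
  shows "deg n E k = n - 1 \<longleftrightarrow> (\<forall>j<n. j \<noteq> k \<longrightarrow> E k j)"
proof -
  note sub = adj_subset_others[OF assms(1), of k]
  have card: "card ({..<n} - {k}) = n - 1" using assms(2) by simp
  have "deg n E k = n - 1 \<longleftrightarrow> {j. j < n \<and> E k j} = {..<n} - {k}"
  proof
    assume "deg n E k = n - 1"
    thus "{j. j < n \<and> E k j} = {..<n} - {k}"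
      using card by (intro card_subset_eq[OF _ sub]) (auto simp: deg_def)
  qed (simp add: deg_def card)
  also have "\<dots> \<longleftrightarrow> (\<forall>j<n. j \<noteq> k \<longrightarrow> E k j)" using sub by blast
  finally show ?thesis .
qed

lemma deg_pos_if_connected:
  assumes "simple_graph n E" "connected_graph n E" "2 \<le> n" "k < n"
  shows "0 < deg n E k"
proof -
  define u where "u = (if k = 0 then 1 else (0::nat))"
  have "E\<^sup>*\<^sup>* k u" "u \<noteq> k" using assms unfolding connected_graph_def u_def by auto
  then obtain j where "E k j" by (metis converse_rtranclpE)
  hence "j \<in> {j. j < n \<and> E k j}" using simple_graph_adj_less[OF assms(1)] by blast
  thus ?thesis unfolding deg_def by (auto simp: card_gt_0_iff)
qed

lemma bidegreed_if_two_blocks: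
  assumes "0 < t" "t < n" and full: "\<And>k. k < t \<Longrightarrow> deg n E k = n - 1"
    and tail: "\<And>k. t \<le> k \<Longrightarrow> k < n \<Longrightarrow> deg n E k = deg n E t" and "deg n E t < n - 1"
  shows "bidegreed n E"
proof -
  have "deg n E ` {..<n} \<subseteq> {n - 1, deg n E t}"
  proof
    fix a assume "a \<in> deg n E ` {..<n}"
    then obtain k where "k < n" "a = deg n E k" by blast
    thus "a \<in> {n - 1, deg n E t}" using full[of k] tail[of k] by (cases "k < t") simp_all
  qed
  moreover have "deg n E 0 \<in> deg n E ` {..<n}" "deg n E t \<in> deg n E ` {..<n}"
    using assms(1,2) by auto
  ultimately have "deg n E ` {..<n} = {n - 1, deg n E t}"
    using full[OF assms(1)] by auto
  thus ?thesis unfolding bidegreed_def using assms(5) by simp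
qed

lemma signless_laplacian_carrier: "signless_laplacian n E \<in> carrier_mat n n"
  unfolding signless_laplacian_def deg_mat_def adj_mat_def by simp

lemma signless_laplacian_index:
  "k < n \<Longrightarrow> j < n \<Longrightarrow> signless_laplacian n E $$ (k, j)
     = (if k = j then real (deg n E k) else 0) + (if E k j then 1 else 0)"
  unfolding signless_laplacian_def deg_mat_def adj_mat_def by simp

lemma signless_laplacian_row_sum:
  assumes "simple_graph n E" "k < n"
  shows "(\<Sum>j<n. signless_laplacian n E $$ (k, j) * f j)
    = real (deg n E k) * f k + (\<Sum>j | j < n \<and> E k j. f j)"
proof -
  have "signless_laplacian n E $$ (k, j) * f j
      = (if k = j then real (deg n E k) * f j else 0) + (if E k j then f j else 0)" if "j < n" for j
    using signless_laplacian_index[OF assms(2) that] assms(1) unfolding simple_graph_def by auto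
  hence "(\<Sum>j<n. signless_laplacian n E $$ (k, j) * f j)
      = (\<Sum>j<n. if k = j then real (deg n E k) * f j else 0) + (\<Sum>j<n. if E k j then f j else 0)"
    unfolding sum.distrib[symmetric] by (intro sum.cong) auto
  also have "\<dots> = real (deg n E k) * f k + (\<Sum>j | j < n \<and> E k j. f j)"
    using assms(2) by (simp add: sum.If_cases Collect_conj_eq lessThan_def Int_commute)
  finally show ?thesis .
qed

locale signless_laplacian_bound =
  fixes n :: nat and E :: "nat \<Rightarrow> nat \<Rightarrow> bool" and \<alpha> :: real and i :: nat
  assumes graph: "simple_graph n E" and conn: "connected_graph n E" and n2: "2 \<le> n"
    and order: "\<And>k l. k \<le> l \<Longrightarrow> l < n \<Longrightarrow>
       gen_avg_deg n E \<alpha> l + real (deg n E l) \<le> gen_avg_deg n E \<alpha> k + real (deg n E k)"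
    and i: "i < n"
begin

definition s :: "nat \<Rightarrow> real" where
  "s k = gen_avg_deg n E \<alpha> k + real (deg n E k)"

definition \<Delta> :: real where
  "\<Delta> = real (Max (deg n E ` {..<n}))"

definition N :: real where
  "N = Max {real (deg n E b) powr \<alpha> / real (deg n E a) powr \<alpha> | a b. a < n \<and> b < n \<and> E a b}"

definition \<phi> :: real where
  "\<phi> = (s i + \<Delta> - N + sqrt ((s i - \<Delta> + N)\<^sup>2 + 4 * N * (\<Sum>k<i. s k - s i))) / 2"

definition w :: "nat \<Rightarrow> real" where
  "w k = real (deg n E k) powr \<alpha>"

definition c :: real where
  "c = \<phi> - \<Delta> + N"

text \<open>The test vector p k = d_k^alpha x k; the scale c = phi - Delta + N together with the
  quadratic equation phi_root for phi is what makes the row defects of Q p split into the four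
  slacks below.\<close>
definition x :: "nat \<Rightarrow> real" where
  "x k = (if k < i then 1 + (s k - s i) / c else 1)"

definition p :: "nat \<Rightarrow> real" where
  "p k = w k * x k"

lemma adj_less: "E a b \<Longrightarrow> a < n \<and> b < n"
  using simple_graph_adj_less[OF graph] .

lemma adj_sym: "E a b \<Longrightarrow> E b a"
  using graph unfolding simple_graph_def by blast

lemma adj_irrefl: "\<not> E a a"
  using graph unfolding simple_graph_def by blast

lemma deg_pos: "k < n \<Longrightarrow> 0 < deg n E k"
  using deg_pos_if_connected[OF graph conn n2] .

lemma deg_eq_iff_adj_all: "k < n \<Longrightarrow> deg n E k = n - 1 \<longleftrightarrow> (\<forall>j<n. j \<noteq> k \<longrightarrow> E k j)"
  using deg_eq_iff_adj_all[OF graph] .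

lemma w_pos: "k < n \<Longrightarrow> 0 < w k"
  unfolding w_def using deg_pos by simp

lemma w_eq_iff_deg_eq: "\<alpha> \<noteq> 0 \<Longrightarrow> k < n \<Longrightarrow> l < n \<Longrightarrow> w k = w l \<longleftrightarrow> deg n E k = deg n E l"
  unfolding w_def using deg_pos by (simp add: powr_eq_iff_eq_base)

lemma w_alpha_zero: "\<alpha> = 0 \<Longrightarrow> k < n \<Longrightarrow> w k = 1"
  unfolding w_def using deg_pos by simp

lemma s_eq: "s k = real (deg n E k) + (\<Sum>j | j < n \<and> E k j. w j) / w k"
  unfolding s_def gen_avg_deg_def w_def by simp

lemma s_gt_deg: "k < n \<Longrightarrow> real (deg n E k) < s k"
proof -
  assume k: "k < n"
  have "{j. j < n \<and> E k j} \<noteq> {}" using deg_pos[OF k] unfolding deg_def by (intro notI) simp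
  hence "0 < (\<Sum>j | j < n \<and> E k j. w j)" using w_pos by (intro sum_pos) auto
  thus ?thesis unfolding s_eq using w_pos[OF k] by simp
qed

lemma s_antimono: "k \<le> l \<Longrightarrow> l < n \<Longrightarrow> s l \<le> s k"
  using order unfolding s_def .

lemma s_eq_twice_deg:
  assumes "k < n" and "\<And>j. E k j \<Longrightarrow> w j = w k"
  shows "s k = 2 * real (deg n E k)"
proof -
  have "(\<Sum>j | j < n \<and> E k j. w j) = (\<Sum>j | j < n \<and> E k j. w k)"
    using assms(2) by (intro sum.cong) auto
  hence "(\<Sum>j | j < n \<and> E k j. w j) = real (deg n E k) * w k"
    unfolding deg_def by simp
  thus ?thesis unfolding s_eq using w_pos[OF assms(1)] by simp
qed

lemma deg_le_\<Delta>: "k < n \<Longrightarrow> real (deg n E k) \<le> \<Delta>"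
  unfolding \<Delta>_def of_nat_le_iff by (intro Max_ge) auto

lemma \<Delta>_attained: "\<exists>k<n. real (deg n E k) = \<Delta>"
proof -
  have "Max (deg n E ` {..<n}) \<in> deg n E ` {..<n}" using n2 by (intro Max_in) (auto simp: lessThan_empty_iff)
  thus ?thesis unfolding \<Delta>_def by auto
qed

lemma \<Delta>_eq_deg_if_full:
  assumes "k < n" "deg n E k = n - 1"
  shows "\<Delta> = real (deg n E k)"
proof -
  obtain l where "l < n" "real (deg n E l) = \<Delta>" using \<Delta>_attained by blast
  moreover have "deg n E l \<le> deg n E k" using deg_le[OF graph \<open>l < n\<close>] assms(2) by simp
  ultimately show ?thesis using deg_le_\<Delta>[OF assms(1)] by simp
qed

lemma N_finite: "finite {real (deg n E b) powr \<alpha> / real (deg n E a) powr \<alpha> | a b. a < n \<and> b < n \<and> E a b}"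
proof -
  have "{real (deg n E b) powr \<alpha> / real (deg n E a) powr \<alpha> | a b. a < n \<and> b < n \<and> E a b}
      \<subseteq> (\<lambda>(a, b). real (deg n E b) powr \<alpha> / real (deg n E a) powr \<alpha>) ` ({..<n} \<times> {..<n})"
    by auto
  thus ?thesis by (rule finite_subset) auto
qed

lemma N_ge: "E a b \<Longrightarrow> w b / w a \<le> N"
  unfolding N_def w_def using N_finite adj_less by (intro Max_ge) auto

lemma N_attained: "\<exists>a b. E a b \<and> N = w b / w a"
proof -
  obtain b where "E 0 b" using deg_pos[of 0] n2 unfolding deg_def by (auto simp: card_gt_0_iff)
  hence "{real (deg n E b) powr \<alpha> / real (deg n E a) powr \<alpha> | a b. a < n \<and> b < n \<and> E a b} \<noteq> {}"
    using adj_less[of 0 b] by auto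
  hence "N \<in> {real (deg n E b) powr \<alpha> / real (deg n E a) powr \<alpha> | a b. a < n \<and> b < n \<and> E a b}"
    unfolding N_def using N_finite by (intro Max_in)
  thus ?thesis unfolding w_def by auto
qed

lemma N_pos: "0 < N"
proof -
  obtain a b where "E a b" "N = w b / w a" using N_attained by blast
  thus ?thesis using adj_less[OF \<open>E a b\<close>] w_pos by simp
qed

lemma N_alpha_zero: "\<alpha> = 0 \<Longrightarrow> N = 1"
proof -
  assume "\<alpha> = 0"
  obtain a b where "E a b" "N = w b / w a" using N_attained by blast
  thus ?thesis using adj_less[OF \<open>E a b\<close>] w_alpha_zero[OF \<open>\<alpha> = 0\<close>] by simp
qed

lemma excess_nonneg: "0 \<le> (\<Sum>k<i. s k - s i)"
  using i by (intro sum_nonneg) (auto intro: s_antimono)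

lemma c_pos: "0 < c"
proof -
  define a where "a = s i - \<Delta> + N"
  define R where "R = sqrt (a\<^sup>2 + 4 * N * (\<Sum>k<i. s k - s i))"
  have c_eq: "c = (a + R) / 2" unfolding c_def \<phi>_def a_def R_def by (simp add: field_simps)
  have "\<bar>a\<bar> \<le> R" unfolding R_def using N_pos excess_nonneg by (intro real_le_rsqrt) auto
  show ?thesis
  proof (cases "0 < a")
    case True thus ?thesis using \<open>\<bar>a\<bar> \<le> R\<close> unfolding c_eq by simp
  next
    case False
    obtain k where k: "k < n" "real (deg n E k) = \<Delta>" using \<Delta>_attained by blast
    have "s i < s 0" using False N_pos s_gt_deg[OF k(1)] s_antimono[of 0 k] k by (simp add: a_def)
    hence "0 < i" by (cases i) auto
    have "s 0 - s i \<le> (\<Sum>k<i. s k - s i)"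
      using i \<open>0 < i\<close> by (intro member_le_sum) (auto intro: s_antimono)
    hence "0 < (\<Sum>k<i. s k - s i)" using \<open>s i < s 0\<close> by simp
    hence "\<bar>a\<bar> < R" unfolding R_def using N_pos by (simp add: real_less_rsqrt)
    thus ?thesis unfolding c_eq by simp
  qed
qed

lemma \<phi>_root: "(\<phi> - s i) * c = N * (\<Sum>k<i. s k - s i)"
proof -
  let ?a = "s i - \<Delta> + N" and ?D = "(s i - \<Delta> + N)\<^sup>2 + 4 * N * (\<Sum>k<i. s k - s i)"
  have "0 \<le> ?D" using N_pos excess_nonneg by simp
  have "(\<phi> - s i) * c = (sqrt ?D - ?a) * (sqrt ?D + ?a) / 4"
    unfolding c_def \<phi>_def by (simp add: field_simps)
  also have "\<dots> = ((sqrt ?D)\<^sup>2 - ?a\<^sup>2) / 4" by (simp add: algebra_simps power2_eq_square)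
  finally show ?thesis using \<open>0 \<le> ?D\<close> by simp
qed

lemma x_ge_1: "1 \<le> x k"
  unfolding x_def using c_pos s_antimono[of k i] i by auto

lemma x_gt_1_iff: "1 < x j \<longleftrightarrow> j < n \<and> s i < s j"
  unfolding x_def using c_pos i s_antimono[of i j] by (auto simp: field_simps)

lemma p_pos: "k < n \<Longrightarrow> 0 < p k"
  unfolding p_def using w_pos x_ge_1[of k] by simp

lemma N_sum_x: "N * (\<Sum>j<n. x j - 1) = \<phi> - s i"
proof -
  have "(\<Sum>j<n. x j - 1) = (\<Sum>j<i. x j - 1)"
    using i by (intro sum.mono_neutral_right) (auto simp: x_def)
  also have "\<dots> = (\<Sum>j<i. s j - s i) / c"
    by (simp add: x_def sum_divide_distrib)
  finally have "(\<Sum>j<n. x j - 1) * c = (\<Sum>k<i. s k - s i)" using c_pos by simp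
  hence "c * (N * (\<Sum>j<n. x j - 1)) = c * (\<phi> - s i)" using \<phi>_root by (simp add: algebra_simps)
  thus ?thesis using c_pos by simp
qed

definition slack_adj :: "nat \<Rightarrow> real" where
  "slack_adj k = (\<Sum>j | j < n \<and> E k j. (N * w k - w j) * (x j - 1))"

definition slack_nonadj :: "nat \<Rightarrow> real" where
  "slack_nonadj k = N * w k * (\<Sum>j | j < n \<and> j \<noteq> k \<and> \<not> E k j. x j - 1)"

definition slack_deg :: "nat \<Rightarrow> real" where
  "slack_deg k = w k * (\<Delta> - real (deg n E k)) * (x k - 1)"

definition slack_s :: "nat \<Rightarrow> real" where
  "slack_s k = w k * (c * (x k - 1) - (s k - s i))"

lemma sum_split_adj:
  assumes "k < n"
  shows "(\<Sum>j<n. f j) = f k + (\<Sum>j | j < n \<and> E k j. f j) + (\<Sum>j | j < n \<and> j \<noteq> k \<and> \<not> E k j. f j)"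
proof -
  have "{..<n} = insert k ({j. j < n \<and> E k j} \<union> {j. j < n \<and> j \<noteq> k \<and> \<not> E k j})"
    using assms by auto
  moreover have "k \<notin> {j. j < n \<and> E k j} \<union> {j. j < n \<and> j \<noteq> k \<and> \<not> E k j}"
    using adj_irrefl by auto
  ultimately show ?thesis by (simp add: sum.union_disjoint add.assoc disjoint_iff)
qed

lemma row_defect_eq_slacks:
  assumes k: "k < n"
  shows "\<phi> * p k - (\<Sum>j<n. signless_laplacian n E $$ (k, j) * p j)
    = slack_adj k + slack_nonadj k + slack_deg k + slack_s k"
proof -
  define X1 where "X1 = (\<Sum>j | j < n \<and> E k j. x j - 1)"
  define X2 where "X2 = (\<Sum>j | j < n \<and> j \<noteq> k \<and> \<not> E k j. x j - 1)"
  define Y where "Y = (\<Sum>j | j < n \<and> E k j. w j * (x j - 1))"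
  have "(\<Sum>j | j < n \<and> E k j. p j) = (\<Sum>j | j < n \<and> E k j. w j) + Y"
    unfolding Y_def p_def sum.distrib[symmetric] by (intro sum.cong) (auto simp: algebra_simps)
  hence row: "(\<Sum>j<n. signless_laplacian n E $$ (k, j) * p j)
      = real (deg n E k) * p k + (\<Sum>j | j < n \<and> E k j. w j) + Y"
    unfolding signless_laplacian_row_sum[OF graph k] by simp
  have adj_w: "(\<Sum>j | j < n \<and> E k j. w j) = (s k - real (deg n E k)) * w k"
    using w_pos[OF k] unfolding s_eq by simp
  have "N * ((x k - 1) + X1 + X2) = \<phi> - s i"
    using N_sum_x sum_split_adj[OF k, of "\<lambda>j. x j - 1"] unfolding X1_def X2_def by simp
  hence "N * w k * ((x k - 1) + X1 + X2) = (\<phi> - s i) * w k"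
    by (metis mult.assoc mult.commute)
  moreover have "slack_adj k = N * w k * X1 - Y"
    unfolding slack_adj_def X1_def Y_def sum_distrib_left sum_subtractf[symmetric]
    by (intro sum.cong) (auto simp: algebra_simps)
  ultimately show ?thesis
    unfolding row adj_w
    unfolding slack_nonadj_def slack_deg_def slack_s_def c_def p_def X2_def[symmetric]
    by (simp add: algebra_simps)
qed

lemma slack_adj_eq_0_iff:
  assumes "k < n"
  shows "slack_adj k = 0 \<longleftrightarrow> (\<forall>j. E k j \<longrightarrow> 1 < x j \<longrightarrow> w j = N * w k)"
    and "0 \<le> slack_adj k"
proof -
  have nonneg: "0 \<le> (N * w k - w j) * (x j - 1)" if "j \<in> {j. j < n \<and> E k j}" for j
  proof -
    have "w j / w k \<le> N" using N_ge that by simp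
    hence "w j \<le> N * w k" using w_pos[OF assms] by (simp add: divide_le_eq)
    thus ?thesis using x_ge_1[of j] by simp
  qed
  thus "0 \<le> slack_adj k" unfolding slack_adj_def by (intro sum_nonneg)
  have "slack_adj k = 0 \<longleftrightarrow> (\<forall>j\<in>{j. j < n \<and> E k j}. (N * w k - w j) * (x j - 1) = 0)"
    unfolding slack_adj_def using nonneg by (intro sum_nonneg_eq_0_iff) auto
  also have "\<dots> \<longleftrightarrow> (\<forall>j. E k j \<longrightarrow> 1 < x j \<longrightarrow> w j = N * w k)"
  proof -
    have "(N * w k - w j) * (x j - 1) = 0 \<longleftrightarrow> (1 < x j \<longrightarrow> w j = N * w k)" for j
      using x_ge_1[of j] by auto
    thus ?thesis using adj_less by auto
  qed
  finally show "slack_adj k = 0 \<longleftrightarrow> (\<forall>j. E k j \<longrightarrow> 1 < x j \<longrightarrow> w j = N * w k)" .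
qed

lemma slack_nonadj_eq_0_iff:
  assumes "k < n"
  shows "slack_nonadj k = 0 \<longleftrightarrow> (\<forall>j<n. j \<noteq> k \<longrightarrow> \<not> E k j \<longrightarrow> x j = 1)"
    and "0 \<le> slack_nonadj k"
proof -
  have pos: "0 < N * w k" using N_pos w_pos[OF assms] by simp
  have "(\<Sum>j | j < n \<and> j \<noteq> k \<and> \<not> E k j. x j - 1) = 0
      \<longleftrightarrow> (\<forall>j<n. j \<noteq> k \<longrightarrow> \<not> E k j \<longrightarrow> x j = 1)"
    using x_ge_1 by (subst sum_nonneg_eq_0_iff) auto
  moreover have "0 \<le> (\<Sum>j | j < n \<and> j \<noteq> k \<and> \<not> E k j. x j - 1)"
    using x_ge_1 by (intro sum_nonneg) auto
  ultimately show "slack_nonadj k = 0 \<longleftrightarrow> (\<forall>j<n. j \<noteq> k \<longrightarrow> \<not> E k j \<longrightarrow> x j = 1)"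
    and "0 \<le> slack_nonadj k"
    unfolding slack_nonadj_def using pos N_pos w_pos[OF assms] by simp_all
qed

lemma slack_deg_eq_0_iff:
  assumes "k < n"
  shows "slack_deg k = 0 \<longleftrightarrow> (1 < x k \<longrightarrow> real (deg n E k) = \<Delta>)"
    and "0 \<le> slack_deg k"
  using w_pos[OF assms] x_ge_1[of k] deg_le_\<Delta>[OF assms] unfolding slack_deg_def by auto

lemma slack_s_eq_0_iff:
  assumes "k < n"
  shows "slack_s k = 0 \<longleftrightarrow> (i \<le> k \<longrightarrow> s k = s i)"
    and "0 \<le> slack_s k"
  using w_pos[OF assms] c_pos s_antimono[of i k] assms unfolding slack_s_def x_def by auto

lemma row_sum_eq_iff_slacks_eq_0:
  assumes "k < n"
  shows "(\<Sum>j<n. signless_laplacian n E $$ (k, j) * p j) = \<phi> * p k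
    \<longleftrightarrow> slack_adj k = 0 \<and> slack_nonadj k = 0 \<and> slack_deg k = 0 \<and> slack_s k = 0"
    and "(\<Sum>j<n. signless_laplacian n E $$ (k, j) * p j) \<le> \<phi> * p k"
  using row_defect_eq_slacks[OF assms] slack_adj_eq_0_iff(2)[OF assms] slack_nonadj_eq_0_iff(2)[OF assms]
    slack_deg_eq_0_iff(2)[OF assms] slack_s_eq_0_iff(2)[OF assms]
  by (smt (verit))+

definition tight :: bool where
  "tight \<longleftrightarrow> (\<forall>j<n. s i < s j \<longrightarrow> deg n E j = n - 1 \<and> (\<forall>k. E k j \<longrightarrow> w j = N * w k))
     \<and> (\<forall>k. i \<le> k \<and> k < n \<longrightarrow> s k = s i)"

lemma tightI:
  assumes "\<And>j. j < n \<Longrightarrow> s i < s j \<Longrightarrow> deg n E j = n - 1"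
    and "\<And>j k. j < n \<Longrightarrow> s i < s j \<Longrightarrow> E k j \<Longrightarrow> w j = N * w k"
    and "\<And>k. i \<le> k \<Longrightarrow> k < n \<Longrightarrow> s k = s i"
  shows tight
  unfolding tight_def using assms by blast

lemma tightD:
  assumes tight
  shows "\<And>j. j < n \<Longrightarrow> s i < s j \<Longrightarrow> deg n E j = n - 1"
    and "\<And>j k. j < n \<Longrightarrow> s i < s j \<Longrightarrow> E k j \<Longrightarrow> w j = N * w k"
    and "\<And>k. i \<le> k \<Longrightarrow> k < n \<Longrightarrow> s k = s i"
  using assms unfolding tight_def by blast+

lemma tight_if_slacks_eq_0:
  assumes adj: "\<And>k j. k < n \<Longrightarrow> E k j \<Longrightarrow> 1 < x j \<Longrightarrow> w j = N * w k"
    and nonadj: "\<And>k j. k < n \<Longrightarrow> j < n \<Longrightarrow> j \<noteq> k \<Longrightarrow> \<not> E k j \<Longrightarrow> x j = 1"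
    and tail: "\<And>k. k < n \<Longrightarrow> i \<le> k \<Longrightarrow> s k = s i"
  shows tight
proof (rule tightI)
  fix j assume j: "j < n" "s i < s j"
  hence x: "1 < x j" using x_gt_1_iff by simp
  have "E j k" if "k < n" "k \<noteq> j" for k
  proof (rule adj_sym, rule ccontr)
    assume "\<not> E k j"
    thus False using nonadj[of k j] that j(1) x by auto
  qed
  thus "deg n E j = n - 1" using deg_eq_iff_adj_all[OF j(1)] by blast
  fix k assume "E k j"
  thus "w j = N * w k" using adj[OF _ \<open>E k j\<close> x] adj_less by blast
qed (use tail in blast)

lemma slacks_eq_0_if_tight:
  assumes tight and k: "k < n"
  shows "slack_adj k = 0" "slack_nonadj k = 0" "slack_deg k = 0" "slack_s k = 0"
proof -
  have deg_J: "deg n E j = n - 1" if "1 < x j" for j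
    using tightD(1)[OF assms(1)] that x_gt_1_iff by blast
  have "w j = N * w k" if "E k j" "1 < x j" for j
    using tightD(2)[OF assms(1)] that x_gt_1_iff by blast
  thus "slack_adj k = 0" using slack_adj_eq_0_iff(1)[OF k] by blast
  have "x j = 1" if "j < n" "j \<noteq> k" "\<not> E k j" for j
  proof (rule ccontr)
    assume "x j \<noteq> 1"
    hence "deg n E j = n - 1" using deg_J x_ge_1[of j] by simp
    thus False using deg_eq_iff_adj_all[OF \<open>j < n\<close>] k that adj_sym by blast
  qed
  thus "slack_nonadj k = 0" using slack_nonadj_eq_0_iff(1)[OF k] by blast
  show "slack_deg k = 0"
    using slack_deg_eq_0_iff(1)[OF k] deg_J[of k] \<Delta>_eq_deg_if_full[OF k] by simp
  show "slack_s k = 0"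
    using slack_s_eq_0_iff(1)[OF k] tightD(3)[OF assms(1)] k by blast
qed

lemma rows_eq_iff_tight:
  "(\<forall>k<n. (\<Sum>j<n. signless_laplacian n E $$ (k, j) * p j) = \<phi> * p k) \<longleftrightarrow> tight"
proof
  assume "\<forall>k<n. (\<Sum>j<n. signless_laplacian n E $$ (k, j) * p j) = \<phi> * p k"
  hence slack: "slack_adj k = 0 \<and> slack_nonadj k = 0 \<and> slack_deg k = 0 \<and> slack_s k = 0"
    if "k < n" for k
    using row_sum_eq_iff_slacks_eq_0(1)[OF that] that by blast
  show tight
  proof (rule tight_if_slacks_eq_0)
    fix k j assume "k < n" "E k j" "1 < x j"
    thus "w j = N * w k" using slack_adj_eq_0_iff(1)[OF \<open>k < n\<close>] slack[OF \<open>k < n\<close>] by blast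
  next
    fix k j assume "k < n" "j < n" "j \<noteq> k" "\<not> E k j"
    thus "x j = 1" using slack_nonadj_eq_0_iff(1)[OF \<open>k < n\<close>] slack[OF \<open>k < n\<close>] by blast
  next
    fix k assume "k < n" "i \<le> k"
    thus "s k = s i" using slack_s_eq_0_iff(1)[OF \<open>k < n\<close>] slack[OF \<open>k < n\<close>] by blast
  qed
next
  assume tight
  show "\<forall>k<n. (\<Sum>j<n. signless_laplacian n E $$ (k, j) * p j) = \<phi> * p k"
  proof (intro allI impI)
    fix k assume k: "k < n"
    show "(\<Sum>j<n. signless_laplacian n E $$ (k, j) * p j) = \<phi> * p k"
      using row_sum_eq_iff_slacks_eq_0(1)[OF k] slacks_eq_0_if_tight[OF \<open>tight\<close> k] by blast
  qed
qed

lemma signless_laplacian_nonneg: "k < n \<Longrightarrow> j < n \<Longrightarrow> 0 \<le> signless_laplacian n E $$ (k, j)"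
  by (simp add: signless_laplacian_index)

lemma signless_laplacian_irreducible:
  assumes "a < n" "b < n"
  shows "(\<lambda>a b. a < n \<and> b < n \<and> 0 < signless_laplacian n E $$ (a, b))\<^sup>*\<^sup>* a b"
proof -
  have "E u v \<Longrightarrow> u < n \<and> v < n \<and> 0 < signless_laplacian n E $$ (u, v)" for u v
    using adj_less[of u v] adj_irrefl[of u] by (auto simp: signless_laplacian_index)
  moreover have "E\<^sup>*\<^sup>* a b" using conn assms unfolding connected_graph_def by simp
  ultimately show ?thesis by (rule mono_rtranclp[rule_format])
qed

theorem rho_Q_le: "rho_Q n E \<le> \<phi>"
  unfolding rho_Q_def using n2 signless_laplacian_nonneg p_pos row_sum_eq_iff_slacks_eq_0(2)
  by (intro spectral_radius_le_of_row_bound[OF signless_laplacian_carrier]) auto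

lemma rho_Q_eq_iff_tight: "rho_Q n E = \<phi> \<longleftrightarrow> tight"
  unfolding rows_eq_iff_tight[symmetric]
proof (intro iffI allI impI)
  fix k assume "rho_Q n E = \<phi>" "k < n"
  thus "(\<Sum>j<n. signless_laplacian n E $$ (k, j) * p j) = \<phi> * p k"
    unfolding rho_Q_def
    using n2 signless_laplacian_nonneg p_pos row_sum_eq_iff_slacks_eq_0(2) signless_laplacian_irreducible
    by (intro row_bound_eq_of_spectral_radius_ge[OF signless_laplacian_carrier]) auto
next
  assume "\<forall>k<n. (\<Sum>j<n. signless_laplacian n E $$ (k, j) * p j) = \<phi> * p k"
  thus "rho_Q n E = \<phi>"
    unfolding rho_Q_def using n2 signless_laplacian_nonneg p_pos
    by (intro spectral_radius_eq_of_positive_eigenvector[OF signless_laplacian_carrier]) auto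
qed

lemma s_regular:
  assumes "\<And>k. k < n \<Longrightarrow> deg n E k = r" "k < n"
  shows "s k = 2 * real r"
proof -
  have "w j = w k" if "E k j" for j
    using assms adj_less[OF that] unfolding w_def by simp
  thus ?thesis using s_eq_twice_deg[OF assms(2)] assms by simp
qed

lemma tight_top_block:
  assumes tight "s i < s 0"
  obtains t where "0 < t" "t \<le> i" "\<And>k. k < t \<Longrightarrow> deg n E k = n - 1"
    "\<And>k. t \<le> k \<Longrightarrow> k < n \<Longrightarrow> s k = s i"
proof -
  define t where "t = (LEAST k. \<not> s i < s k)"
  have t_not: "\<not> s i < s t" unfolding t_def by (rule LeastI[of _ i]) simp
  have "t \<le> i" unfolding t_def by (rule Least_le) simp
  have below: "s i < s k" if "k < t" for k using not_less_Least[OF that[unfolded t_def]] by simp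
  have "0 < t" using assms(2) t_not by (cases t) auto
  show ?thesis
  proof (rule that[OF \<open>0 < t\<close> \<open>t \<le> i\<close>])
    fix k assume "k < t"
    thus "deg n E k = n - 1" using tightD(1)[OF assms(1)] below \<open>t \<le> i\<close> i by simp
  next
    fix k assume k: "t \<le> k" "k < n"
    show "s k = s i"
    proof (cases "k \<le> i")
      case True
      thus ?thesis using s_antimono[OF k] s_antimono[OF True i] t_not by simp
    next
      case False
      thus ?thesis using tightD(3)[OF assms(1) _ k(2)] by simp
    qed
  qed
qed

lemma tight_tail_deg_eq:
  assumes tight "s i < s 0" "0 < t" "t < n" "\<And>k. k < t \<Longrightarrow> deg n E k = n - 1"
    and tail_s: "\<And>k. t \<le> k \<Longrightarrow> k < n \<Longrightarrow> s k = s i"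
    and k: "t \<le> k" "k < n"
  shows "deg n E k = deg n E t"
proof (cases "\<alpha> = 0")
  case True
  have "s l = 2 * real (deg n E l)" if "l < n" for l
    using s_eq_twice_deg[OF that] w_alpha_zero[OF True] adj_less that by simp
  thus ?thesis using tail_s[OF k] tail_s[OF order.refl assms(4)] k assms(4) by simp
next
  case False
  have "E l 0" if "t \<le> l" "l < n" for l
    using deg_eq_iff_adj_all[of 0] assms(3,5) that adj_sym by simp
  hence w0: "w 0 = N * w l" if "t \<le> l" "l < n" for l
    using tightD(2)[OF assms(1) _ assms(2)] that n2 by simp
  have "N * w k = N * w t" using w0[OF k] w0[OF order.refl assms(4)] by linarith
  hence "w k = w t" using N_pos by simp
  thus ?thesis using w_eq_iff_deg_eq[OF False k(2) assms(4)] by simp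
qed

lemma tight_alpha_nonzero:
  assumes "\<alpha> \<noteq> 0" tight "s i < s 0" "0 < t" "t < n"
    and full: "\<And>k. k < t \<Longrightarrow> deg n E k = n - 1" and "deg n E t < n - 1"
  shows "0 < \<alpha>" and "t = 1"
proof -
  have n0: "0 < n" using n2 by simp
  have "E 0 t" using deg_eq_iff_adj_all[of 0] full[OF assms(4)] assms(4,5) by simp
  hence N_eq: "w 0 = N * w t" using tightD(2)[OF assms(2) n0 assms(3)] adj_sym by blast
  have "w t / w 0 \<le> w 0 / w t"
    using N_ge[OF \<open>E 0 t\<close>] N_eq w_pos[OF assms(5)] by simp
  hence "(w t)\<^sup>2 \<le> (w 0)\<^sup>2"
    using w_pos[OF n0] w_pos[OF assms(5)] by (simp add: field_simps power2_eq_square)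
  hence w_le: "w t \<le> w 0" by (rule power2_le_imp_le) (use w_pos[OF n0] in simp)
  have deg_lt: "real (deg n E t) < real (deg n E 0)" using assms(7) full[OF assms(4)] by simp
  show "0 < \<alpha>"
  proof (rule ccontr)
    assume "\<not> 0 < \<alpha>"
    hence "w 0 < w t"
      using assms(1) powr_less_mono2_neg[OF _ _ deg_lt] deg_pos[OF assms(5)] unfolding w_def by simp
    thus False using w_le by simp
  qed
  hence "w t < w 0" using powr_less_mono2[OF _ _ deg_lt] unfolding w_def by simp
  moreover have "N = w 0 / w t" using N_eq w_pos[OF assms(5)] by simp
  ultimately have N_gt: "1 < N" using w_pos[OF assms(5)] by simp
  show "t = 1"
  proof (rule ccontr)
    assume "t \<noteq> 1"
    hence "1 < t" using assms(4) by simp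
    hence "E 1 0" "w 1 = w 0"
      using deg_eq_iff_adj_all[of 0] full[of 0] full[of 1] assms(4,5) adj_sym unfolding w_def by auto
    hence "w 0 = N * w 0" using tightD(2)[OF assms(2) n0 assms(3), of 1] by simp
    thus False using N_gt w_pos[OF n0] by simp
  qed
qed

definition extremal :: bool where
  "extremal \<longleftrightarrow>
     (\<forall>k<n. s k = s 0)
     \<or> (\<alpha> = 0 \<and> (\<exists>t. 1 \<le> t \<and> t \<le> i \<and> bidegreed n E \<and>
            (\<forall>k<t. deg n E k = n - 1) \<and> (\<forall>k. t \<le> k \<and> k < n \<longrightarrow> deg n E k = deg n E t)
            \<and> deg n E t < n - 1))
     \<or> (\<alpha> > 0 \<and> (\<exists>t. 1 \<le> t \<and> t \<le> i) \<and> bidegreed n E \<and>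
            s 0 > s 1 \<and> (\<forall>k. 1 \<le> k \<and> k < n \<longrightarrow> s k = s 1) \<and>
            deg n E 0 = n - 1 \<and> (\<forall>k. 1 \<le> k \<and> k < n \<longrightarrow> deg n E k = deg n E 1) \<and> deg n E 1 < n - 1)"

lemma extremal_if_tight:
  assumes tight
  shows extremal
proof (cases "s i < s 0")
  case False
  have "s k = s 0" if "k < n" for k
  proof (cases "k \<le> i")
    case True
    thus ?thesis using False s_antimono[OF True i] s_antimono[of 0 k] that by simp
  next
    case False
    thus ?thesis using \<open>\<not> s i < s 0\<close> tightD(3)[OF assms _ that] s_antimono[of 0 i] i by simp
  qed
  thus ?thesis unfolding extremal_def by blast
next
  case True
  obtain t where t: "0 < t" "t \<le> i" and full: "\<And>k. k < t \<Longrightarrow> deg n E k = n - 1"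
    and tail_s: "\<And>k. t \<le> k \<Longrightarrow> k < n \<Longrightarrow> s k = s i"
    using tight_top_block[OF assms True] by blast
  have tn: "t < n" using t i by simp
  have tail: "\<And>k. t \<le> k \<Longrightarrow> k < n \<Longrightarrow> deg n E k = deg n E t"
    using tight_tail_deg_eq[OF assms True t(1) tn full tail_s] .
  have "deg n E t < n - 1"
  proof (rule ccontr)
    assume "\<not> deg n E t < n - 1"
    hence regular: "deg n E k = n - 1" if "k < n" for k
      using full[of k] tail[of k] deg_le[OF graph tn] that by (cases "k < t") auto
    have "s i = s 0" using s_regular[OF regular i] s_regular[OF regular, of 0] n2 by simp
    thus False using True by simp
  qed
  note bidegreed = bidegreed_if_two_blocks[OF t(1) tn full tail this]
  show ?thesis
  proof (cases "\<alpha> = 0")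
    case True
    moreover have "1 \<le> t" using t(1) by simp
    ultimately have "\<alpha> = 0 \<and> (\<exists>t. 1 \<le> t \<and> t \<le> i \<and> bidegreed n E \<and>
        (\<forall>k<t. deg n E k = n - 1) \<and> (\<forall>k. t \<le> k \<and> k < n \<longrightarrow> deg n E k = deg n E t)
        \<and> deg n E t < n - 1)"
      using t(2) full tail bidegreed \<open>deg n E t < n - 1\<close> by blast
    thus ?thesis unfolding extremal_def by (intro disjI2 disjI1)
  next
    case False
    have "0 < \<alpha>" "t = 1"
      using tight_alpha_nonzero[OF False assms True t(1) tn full \<open>deg n E t < n - 1\<close>] by auto
    have s_tail: "s k = s 1" if "1 \<le> k" "k < n" for k
      using tail_s[of k] tail_s[of 1] \<open>t = 1\<close> that tn by simp
    have deg_tail: "deg n E k = deg n E 1" if "1 \<le> k" "k < n" for k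
      using tail[of k] \<open>t = 1\<close> that by simp
    have "s 1 < s 0" using tail_s[of 1] \<open>t = 1\<close> tn True by simp
    have "\<exists>t::nat. 1 \<le> t \<and> t \<le> i" using t \<open>t = 1\<close> by blast
    have "deg n E 0 = n - 1" "deg n E 1 < n - 1"
      using t(1) full[of 0] \<open>t = 1\<close> \<open>deg n E t < n - 1\<close> by auto
    hence "\<alpha> > 0 \<and> (\<exists>t. 1 \<le> t \<and> t \<le> i) \<and> bidegreed n E \<and>
        s 0 > s 1 \<and> (\<forall>k. 1 \<le> k \<and> k < n \<longrightarrow> s k = s 1) \<and>
        deg n E 0 = n - 1 \<and> (\<forall>k. 1 \<le> k \<and> k < n \<longrightarrow> deg n E k = deg n E 1) \<and> deg n E 1 < n - 1"
      using \<open>0 < \<alpha>\<close> \<open>\<exists>t::nat. 1 \<le> t \<and> t \<le> i\<close> bidegreed \<open>s 1 < s 0\<close> s_tail deg_tail by blast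
    thus ?thesis unfolding extremal_def by (intro disjI2)
  qed
qed

lemma tight_if_s_const:
  assumes "\<forall>k<n. s k = s 0"
  shows tight
proof -
  have s_const: "s k = s i" if "k < n" for k
    using assms[rule_format, OF that] assms[rule_format, OF i] by simp
  show tight
  proof (rule tightI)
    fix j assume "j < n" "s i < s j"
    thus "deg n E j = n - 1" using s_const[of j] by simp
    fix k from \<open>j < n\<close> \<open>s i < s j\<close> show "w j = N * w k" using s_const[of j] by simp
  qed (use s_const in blast)
qed

lemma tight_if_alpha_zero:
  assumes "\<alpha> = 0" "1 \<le> t" "t \<le> i" and full: "\<And>k. k < t \<Longrightarrow> deg n E k = n - 1"
    and tail: "\<And>k. t \<le> k \<Longrightarrow> k < n \<Longrightarrow> deg n E k = deg n E t"
  shows tight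
proof -
  have s_deg: "s k = 2 * real (deg n E k)" if "k < n" for k
    using s_eq_twice_deg[OF that] w_alpha_zero[OF assms(1)] adj_less that by simp
  have tail_s: "s k = s i" if "t \<le> k" "k < n" for k
    using s_deg[OF that(2)] s_deg[OF i] tail[OF that] tail[of i] that assms(3) i by simp
  show tight
  proof (rule tightI)
    fix j assume "j < n" "s i < s j"
    hence "j < t" using tail_s[of j] by (cases "t \<le> j") auto
    thus "deg n E j = n - 1" using full by simp
    fix k assume "E k j"
    thus "w j = N * w k" using w_alpha_zero[OF assms(1)] N_alpha_zero[OF assms(1)] adj_less by simp
  next
    fix k assume "i \<le> k" "k < n"
    thus "s k = s i" using tail_s[of k] assms(3) by simp
  qed
qed

lemma tight_if_alpha_pos:
  assumes "0 < \<alpha>" "1 \<le> i" and d0: "deg n E 0 = n - 1"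
    and tail: "\<And>k. 1 \<le> k \<Longrightarrow> k < n \<Longrightarrow> deg n E k = deg n E 1" and "deg n E 1 < n - 1"
    and tail_s: "\<And>k. 1 \<le> k \<Longrightarrow> k < n \<Longrightarrow> s k = s 1"
  shows tight
proof -
  have n1: "1 < n" using assms(2) i by simp
  have w_tail: "w k = w 1" if "1 \<le> k" "k < n" for k using tail[OF that] unfolding w_def by simp
  have "w 1 < w 0"
    using powr_less_mono2[OF assms(1)] \<open>deg n E 1 < n - 1\<close> d0 unfolding w_def by simp
  have "E 0 1" using deg_eq_iff_adj_all[of 0] d0 n1 by simp
  have "N = w 0 / w 1"
  proof (rule antisym)
    obtain a b where ab: "E a b" "N = w b / w a" using N_attained by blast
    have w_range: "w l \<in> {w 0, w 1}" if "l < n" for l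
      using w_tail[of l] that by (cases l) auto
    have w_ab: "w a \<in> {w 0, w 1}" "w b \<in> {w 0, w 1}"
      using w_range adj_less[OF ab(1)] by auto
    have "w 1 * w 1 \<le> w 0 * w 0" using \<open>w 1 < w 0\<close> w_pos[of 1] n1 by (intro mult_mono) auto
    hence "w 1 / w 0 \<le> w 0 / w 1" "1 \<le> w 0 / w 1"
      using \<open>w 1 < w 0\<close> w_pos[of 1] w_pos[of 0] n1 by (auto simp: field_simps)
    thus "N \<le> w 0 / w 1" using ab(2) w_ab w_pos[of 0] w_pos[of 1] n1 by auto
    show "w 0 / w 1 \<le> N" using N_ge adj_sym[OF \<open>E 0 1\<close>] by simp
  qed
  show tight
  proof (rule tightI)
    fix j assume j: "j < n" "s i < s j"
    have "j = 0" using tail_s[of j] tail_s[of i] j assms(2) i by (cases j) auto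
    thus "deg n E j = n - 1" using d0 by simp
    fix k assume "E k j"
    hence "1 \<le> k" "k < n" using \<open>j = 0\<close> adj_irrefl[of 0] adj_less[of k j] by (cases k; simp)+
    thus "w j = N * w k" using \<open>j = 0\<close> w_tail[of k] \<open>N = w 0 / w 1\<close> w_pos[OF n1] by simp
  next
    fix k assume "i \<le> k" "k < n"
    thus "s k = s i" using tail_s[of k] tail_s[of i] assms(2) i by simp
  qed
qed

lemma tight_if_extremal:
  assumes extremal
  shows tight
  using assms unfolding extremal_def
proof (elim disjE conjE exE)
  assume "\<forall>k<n. s k = s 0"
  thus tight by (rule tight_if_s_const)
next
  fix t assume "\<alpha> = 0" "1 \<le> t" "t \<le> i" "\<forall>k<t. deg n E k = n - 1"
    "\<forall>k. t \<le> k \<and> k < n \<longrightarrow> deg n E k = deg n E t"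
  thus tight by (intro tight_if_alpha_zero[of t]) blast+
next
  fix t assume "0 < \<alpha>" "1 \<le> t" "t \<le> i" "deg n E 0 = n - 1"
    "\<forall>k. 1 \<le> k \<and> k < n \<longrightarrow> deg n E k = deg n E 1" "deg n E 1 < n - 1"
    "\<forall>k. 1 \<le> k \<and> k < n \<longrightarrow> s k = s 1"
  moreover have "1 \<le> i" using \<open>1 \<le> t\<close> \<open>t \<le> i\<close> by simp
  ultimately show tight by (intro tight_if_alpha_pos) blast+
qed

theorem rho_Q_eq_iff_extremal: "rho_Q n E = \<phi> \<longleftrightarrow> extremal"
  using rho_Q_eq_iff_tight extremal_if_tight tight_if_extremal by blast

end

theorem theorem4:
  fixes n :: nat and E :: "nat \<Rightarrow> nat \<Rightarrow> bool" and \<alpha> :: real and i :: nat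
  defines "d \<equiv> deg n E"
      and "s \<equiv> (\<lambda>k. gen_avg_deg n E \<alpha> k + real (deg n E k))"
      and "\<Delta> \<equiv> real (Max (deg n E ` {..<n}))"
      and "N \<equiv> Max {real (deg n E b) powr \<alpha> / real (deg n E a) powr \<alpha> | a b. a < n \<and> b < n \<and> E a b}"
  assumes graph: "simple_graph n E"
      and conn: "connected_graph n E"
      and n2: "n \<ge> 2"
      and order: "\<And>k l. k \<le> l \<Longrightarrow> l < n \<Longrightarrow> s l \<le> s k"
      and i: "i < n"
  shows "(rho_Q n E \<le> (s i + \<Delta> - N + sqrt ((s i - \<Delta> + N)\<^sup>2 + 4 * N * (\<Sum>k<i. s k - s i))) / 2)
    \<and> (rho_Q n E = (s i + \<Delta> - N + sqrt ((s i - \<Delta> + N)\<^sup>2 + 4 * N * (\<Sum>k<i. s k - s i))) / 2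
         \<longleftrightarrow>
         (\<forall>k<n. s k = s 0)
         \<or> (\<alpha> = 0 \<and> (\<exists>t. 1 \<le> t \<and> t \<le> i \<and> bidegreed n E \<and>
                (\<forall>k<t. d k = n - 1) \<and> (\<forall>k. t \<le> k \<and> k < n \<longrightarrow> d k = d t) \<and> d t < n - 1))
         \<or> (\<alpha> > 0 \<and> (\<exists>t. 1 \<le> t \<and> t \<le> i) \<and> bidegreed n E \<and>
                s 0 > s 1 \<and> (\<forall>k. 1 \<le> k \<and> k < n \<longrightarrow> s k = s 1) \<and>
                d 0 = n - 1 \<and> (\<forall>k. 1 \<le> k \<and> k < n \<longrightarrow> d k = d 1) \<and> d 1 < n - 1))"
proof -
  interpret B: signless_laplacian_bound n E \<alpha> i
    using graph conn n2 order i unfolding s_def by unfold_locales auto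
  have "s = B.s" by (rule ext) (simp add: s_def B.s_def)
  moreover have "\<Delta> = B.\<Delta>" "N = B.N" by (simp_all add: \<Delta>_def B.\<Delta>_def N_def B.N_def)
  ultimately show ?thesis
    using B.rho_Q_le B.rho_Q_eq_iff_extremal
    unfolding B.\<phi>_def B.extremal_def d_def by simp
qed

end
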